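(* Let $\mathcal N=(\mathcal V,\mathcal R)$ be a non-autocatalytic reaction network on $n$ species. Let $J(\mathbf x,\mathbf k)$ and $\tilde J(\mathbf x,\mathbf k)$ be the matrices defined in the context, viewed as functions of $\mathbf x\in\mathbb R^n_{>0}$ and $\mathbf k\in\mathbb R^{\mathcal R}_{>0}$. Suppose that for every choice of $\mathbf k>\mathbf 0$ and every positive equilibrium $\mathbf x\in\mathbb R^n_{>0}$ of the mass action system $\mathcal N_{\mathbf k}$, we have $\det J(\mathbf x,\mathbf k)\neq 0$, $\tilde J(\mathbf x,\mathbf k)_{ii}<0$ for all $i$, and $-\tilde J(\mathbf x,\mathbf k)$ is a $P_0$-matrix. Then $\mathcal N$ is delay stable.
   Context: A reaction network $\mathcal N=(\mathcal V,\mathcal R)$ is a finite directed graph whose vertices (complexes) are vectors $\mathbf y\in\mathbb R^n_{\ge 0}$; each edge $\mathbf y\to\mathbf y'$ is a reaction. A reaction $\mathbf y\to\mathbf y'$ is autocatalytic if $\mathrm{supp}(\mathbf y)\cap\mathrm{supp}(\mathbf y')\neq\emptyset$ and $y_i'>y_i$ for every $i\in\mathrm{supp}(\mathbf y)\cap\mathrm{supp}(\mathbf y')$; the network is non-autocatalytic if it has none. Write $\mathbf x^{\mathbf y}=\prod_i x_i^{y_i}$. The mass action system $\mathcal N_{\mathbf k}$ is $\dot{\mathbf x}=\sum_{\mathbf y\to\mathbf y'}k_{\mathbf y\to\mathbf y'}\mathbf x^{\mathbf y}(\mathbf y'-\mathbf y)$. Given delays $\boldsymbol\tau\in\mathbb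 R^{\mathcal R}_{\ge0}$ (one per reaction), the delay mass action system $\mathcal N_{\boldsymbol\tau,\mathbf k}$ is $\dot{\mathbf x}(t)=\sum_{\mathbf y\to\mathbf y'}k_{\mathbf y\to\mathbf y'}[\mathbf x(t-\tau_{\mathbf y\to\mathbf y'})]^{\mathbf y}\mathbf y'-\sum_{\mathbf y\to\mathbf y'}k_{\mathbf y\to\mathbf y'}[\mathbf x(t)]^{\mathbf y}\mathbf y$; its positive equilibria coincide with those of $\mathcal N_{\mathbf k}$. Define $n\times n$ matrices (row $j$, column $i$): $(J_\lambda)_{ji}(\mathbf x,\mathbf k,\boldsymbol\tau)=\sum_{\mathbf y\to\mathbf y'}k_{\mathbf y\to\mathbf y'}\mathbf x^{\mathbf y}\frac{y_i}{x_i}\big(y'_je^{-\lambda\tau_{\mathbf y\to\mathbf y'}}-y_j\big)$ for $\lambda\in\mathbb C$; $J_{ji}(\mathbf x,\mathbf k)=\sum_{\mathbf y\to\mathbf y'}k_{\mathbf y\to\mathbf y'}\mathbf x^{\mathbf y}\frac{y_i}{x_i}(y'_j-y_j)$; $\tilde J_{ji}(\mathbf x,\mathbf k)=\sum_{\mathbf y\to\mathbf y'}k_{\mathbf y\to\mathbf y'}\mathbf x^{\mathbf y}\frac{y_i}{x_i}(y'_j+y_j)$ for $j\ne i$ and $\tilde J_{ii}(\mathbf x,\mathbf k)=\sum_{\mathbf y\to\mathbf y'}k_{\mathbf y\to\mathbf y'}\mathbf x^{\mathbf y}\frac{y_i}{x_i}(y'_i-y_i)$. A $P_0$-matrix is a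 real square matrix with all principal minors non-negative. The network $\mathcal N$ is delay stable if for every $\mathbf k\in\mathbb R^{\mathcal R}_{>0}$, every $\boldsymbol\tau\in\mathbb R^{\mathcal R}_{\ge0}$ and every positive equilibrium $\mathbf x^*$ of $\mathcal N_{\boldsymbol\tau,\mathbf k}$, every root $\lambda$ of the characteristic equation $\det(J_\lambda(\mathbf x^*,\mathbf k,\boldsymbol\tau)-\lambda I)=0$ has negative real part. *)

theory Defs
  imports "HOL-Analysis.Analysis" "HOL-Combinatorics.Permutations"
begin

text \<open>Species are indexed by a finite type 'n; complexes are vectors in real^'n. A reaction network is given by its finite
  set of reactions R (the complexes V are those occurring in R).\<close>

type_synonym 'n reaction = "(real^'n) \<times> (real^'n)"

definition reaction_network :: "('n::finite) reaction set \<Rightarrow> bool" where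
  "reaction_network R \<longleftrightarrow> finite R \<and>
     (\<forall>(y, y') \<in> R. y \<noteq> y' \<and> (\<forall>i. y $ i \<ge> 0 \<and> y' $ i \<ge> 0))"

definition supp :: "real^('n::finite) \<Rightarrow> 'n set" where
  "supp y = {i. y $ i \<noteq> 0}"

definition autocatalytic :: "('n::finite) reaction \<Rightarrow> bool" where
  "autocatalytic r \<longleftrightarrow> (case r of (y, y') \<Rightarrow>
     supp y \<inter> supp y' \<noteq> {} \<and> (\<forall>i \<in> supp y \<inter> supp y'. y' $ i > y $ i))"

definition non_autocatalytic :: "('n::finite) reaction set \<Rightarrow> bool" where
  "non_autocatalytic R \<longleftrightarrow> (\<forall>r \<in> R. \<not> autocatalytic r)"

definition monom :: "real^('n::finite) \<Rightarrow> real^'n \<Rightarrow> real" where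
  "monom x y = (\<Prod>i\<in>UNIV. x $ i powr y $ i)"

definition positive_vec :: "real^('n::finite) \<Rightarrow> bool" where
  "positive_vec x \<longleftrightarrow> (\<forall>i. x $ i > 0)"

definition mass_action_rhs :: "('n::finite) reaction set \<Rightarrow> ('n reaction \<Rightarrow> real) \<Rightarrow> real^'n \<Rightarrow> real^'n" where
  "mass_action_rhs R k x = (\<Sum>(y, y') \<in> R. (k (y, y') * monom x y) *\<^sub>R (y' - y))"

definition positive_equilibrium :: "('n::finite) reaction set \<Rightarrow> ('n reaction \<Rightarrow> real) \<Rightarrow> real^'n \<Rightarrow> bool" where
  "positive_equilibrium R k x \<longleftrightarrow> positive_vec x \<and> mass_action_rhs R k x = 0"

text \<open>Positive equilibria of the delay system N_{tau,k}: constant positive solutions,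
  i.e. x with sum k x^y y' - sum k x^y y = 0 (delays play no role for constants).\<close>
definition delay_positive_equilibrium ::
  "('n::finite) reaction set \<Rightarrow> ('n reaction \<Rightarrow> real) \<Rightarrow> ('n reaction \<Rightarrow> real) \<Rightarrow> real^'n \<Rightarrow> bool" where
  "delay_positive_equilibrium R tau k x \<longleftrightarrow> positive_vec x \<and>
     (\<Sum>(y, y') \<in> R. (k (y, y') * monom x y) *\<^sub>R y') - (\<Sum>(y, y') \<in> R. (k (y, y') * monom x y) *\<^sub>R y) = 0"

text \<open>Matrices: entry (row j, column i) is  A $ j $ i.\<close>
definition J_lambda :: "('n::finite) reaction set \<Rightarrow> real^'n \<Rightarrow> ('n reaction \<Rightarrow> real) \<Rightarrow> ('n reaction \<Rightarrow> real)
    \<Rightarrow> complex \<Rightarrow> complex^'n^'n" where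
  "J_lambda R x k tau lam = (\<chi> j. \<chi> i. \<Sum>(y, y') \<in> R.
      complex_of_real (k (y, y') * monom x y * (y $ i / x $ i)) *
      (complex_of_real (y' $ j) * exp (- lam * complex_of_real (tau (y, y'))) - complex_of_real (y $ j)))"

definition J_mat :: "('n::finite) reaction set \<Rightarrow> real^'n \<Rightarrow> ('n reaction \<Rightarrow> real) \<Rightarrow> real^'n^'n" where
  "J_mat R x k = (\<chi> j. \<chi> i. \<Sum>(y, y') \<in> R. k (y, y') * monom x y * (y $ i / x $ i) * (y' $ j - y $ j))"

definition J_tilde :: "('n::finite) reaction set \<Rightarrow> real^'n \<Rightarrow> ('n reaction \<Rightarrow> real) \<Rightarrow> real^'n^'n" where
  "J_tilde R x k = (\<chi> j. \<chi> i. if j \<noteq> i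
      then (\<Sum>(y, y') \<in> R. k (y, y') * monom x y * (y $ i / x $ i) * (y' $ j + y $ j))
      else (\<Sum>(y, y') \<in> R. k (y, y') * monom x y * (y $ i / x $ i) * (y' $ i - y $ i)))"

definition principal_minor :: "real^('n::finite)^'n \<Rightarrow> 'n set \<Rightarrow> real" where
  "principal_minor A S = (\<Sum>p | p permutes S. of_int (sign p) * (\<Prod>i\<in>S. A $ i $ p i))"

definition P0_matrix :: "real^('n::finite)^'n \<Rightarrow> bool" where
  "P0_matrix A \<longleftrightarrow> (\<forall>S. S \<noteq> {} \<longrightarrow> principal_minor A S \<ge> 0)"

definition delay_stable :: "('n::finite) reaction set \<Rightarrow> bool" where
  "delay_stable R \<longleftrightarrow>
     (\<forall>k tau x. (\<forall>r\<in>R. k r > 0) \<longrightarrow> (\<forall>r\<in>R. tau r \<ge> 0) \<longrightarrow>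
        delay_positive_equilibrium R tau k x \<longrightarrow>
        (\<forall>lam::complex. det (J_lambda R x k tau lam - mat lam) = 0 \<longrightarrow> Re lam < 0))"

end

theory Submission
  imports Defs
begin

text \<open>
  Let \<lambda> with Re \<lambda> \<ge> 0 be a characteristic root at a positive equilibrium. Then \<lambda> \<noteq> 0, since
  J_0 = J is nonsingular. Every delay factor e^(-\<lambda> \<tau>) lies in the closed unit disc, so the
  off-diagonal entries of J_\<lambda> - \<lambda> I are bounded in modulus by those of J~, and its j-th
  diagonal entry has modulus greater than -J~_jj: its real part is at most J~_jj - Re \<lambda>, and in
  case of equality all relevant delay factors are 1 while \<lambda> is a nonzero imaginary number. For a
  null vector z, the vector u = |z| is then nonzero, nonnegative and satisfies (-J~ + D) u \<le> 0 for
  a positive diagonal matrix D. This is impossible because adding a positive diagonal to the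
  P0-matrix -J~ makes every principal minor positive. Neither non-autocatalysis nor the sign of the
  diagonal of J~ enters this argument.
\<close>

definition add_diagonal :: "real^('n::finite)^'n \<Rightarrow> ('n \<Rightarrow> real) \<Rightarrow> 'n set \<Rightarrow> real^'n^'n" where
  "add_diagonal A d S = (\<chi> j i. A $ j $ i + (if j = i \<and> i \<in> S then d i else 0))"

lemma add_diagonal_empty [simp]: "add_diagonal A d {} = A"
  by (simp add: add_diagonal_def vec_eq_iff)

lemma add_diagonal_insert:
  "s \<notin> S \<Longrightarrow> add_diagonal A d (insert s S) = add_diagonal (add_diagonal A d S) d {s}"
  by (auto simp: add_diagonal_def vec_eq_iff)

lemma principal_minor_empty [simp]: "principal_minor A {} = 1"
  by (simp add: principal_minor_def)

lemma principal_minor_cong: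
  assumes "\<And>i j. i \<in> S \<Longrightarrow> j \<in> S \<Longrightarrow> A $ i $ j = B $ i $ j"
  shows "principal_minor A S = principal_minor B S"
  unfolding principal_minor_def
  by (intro sum.cong refl arg_cong2[where f = "(*)"] prod.cong)
     (auto simp: assms permutes_in_image)

lemma permutes_Diff_singleton_iff:
  assumes "s \<in> T"
  shows "p permutes (T - {s}) \<longleftrightarrow> p permutes T \<and> p s = s"
proof
  assume "p permutes (T - {s})"
  then show "p permutes T \<and> p s = s"
    by (auto intro: permutes_subset dest: permutes_not_in)
next
  assume "p permutes T \<and> p s = s"
  then show "p permutes (T - {s})"
    by (auto intro: permutes_superset)
qed

lemma principal_minor_add_diagonal_singleton:
  fixes A :: "real^('n::finite)^'n"
  shows "principal_minor (add_diagonal A d {s}) T =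
     principal_minor A T + (if s \<in> T then d s * principal_minor A (T - {s}) else 0)"
proof (cases "s \<in> T")
  case False
  then show ?thesis
    by (auto intro: principal_minor_cong simp: add_diagonal_def)
next
  case True
  let ?term = "\<lambda>A T p. of_int (sign p) * (\<Prod>i\<in>T. A $ i $ p i) :: real"
  have split_s: "(\<Prod>i\<in>T. B $ i $ p i) = B $ s $ p s * (\<Prod>i\<in>T - {s}. B $ i $ p i)"
    for B :: "real^'n^'n" and p
    using True by (simp add: prod.remove)
  have off_s: "(\<Prod>i\<in>T - {s}. add_diagonal A d {s} $ i $ p i) = (\<Prod>i\<in>T - {s}. A $ i $ p i)" for p
    by (rule prod.cong) (auto simp: add_diagonal_def)
  have "?term (add_diagonal A d {s}) T p =
          ?term A T p + (if p s = s then d s * ?term A (T - {s}) p else 0)" for p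
    unfolding split_s[of "add_diagonal A d {s}"] split_s[of A] off_s
    by (auto simp: add_diagonal_def algebra_simps)
  then have "principal_minor (add_diagonal A d {s}) T = principal_minor A T +
               (\<Sum>p | p permutes T. if p s = s then d s * ?term A (T - {s}) p else 0)"
    unfolding principal_minor_def by (simp add: sum.distrib)
  also have "(\<Sum>p | p permutes T. if p s = s then d s * ?term A (T - {s}) p else 0) =
               d s * principal_minor A (T - {s})"
    by (simp add: sum.inter_filter[symmetric] finite_permutations sum_distrib_left
        permutes_Diff_singleton_iff[OF True] principal_minor_def)
  finally show ?thesis
    using True by simp
qed

lemma P0_matrix_iff_principal_minor_nonneg: "P0_matrix A \<longleftrightarrow> (\<forall>T. 0 \<le> principal_minor A T)"
  unfolding P0_matrix_def by (metis principal_minor_empty zero_le_one)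

lemma P0_matrix_add_diagonal:
  assumes "P0_matrix A" and "\<forall>i\<in>S. 0 \<le> d i"
  shows "P0_matrix (add_diagonal A d S)"
  using finite[of S] assms(2)
proof (induction S rule: finite_induct)
  case (insert s S)
  then have "\<forall>T. 0 \<le> principal_minor (add_diagonal A d S) T" and "0 \<le> d s"
    by (simp_all add: P0_matrix_iff_principal_minor_nonneg)
  then show ?case
    unfolding add_diagonal_insert[OF insert.hyps(2)] P0_matrix_iff_principal_minor_nonneg
    by (simp add: principal_minor_add_diagonal_singleton)
qed (simp add: assms(1))

lemma principal_minor_add_diagonal_pos:
  assumes "P0_matrix A" and "\<forall>i\<in>S. 0 < d i"
  shows "0 < principal_minor (add_diagonal A d S) S"
  using finite[of S] assms(2)
proof (induction S rule: finite_induct)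
  case (insert s S)
  have "P0_matrix (add_diagonal A d S)"
    using insert.prems by (intro P0_matrix_add_diagonal[OF assms(1)]) (simp add: less_imp_le)
  then have "0 \<le> principal_minor (add_diagonal A d S) (insert s S)"
    by (simp add: P0_matrix_iff_principal_minor_nonneg)
  moreover have "insert s S - {s} = S"
    using insert.hyps by auto
  ultimately show ?case
    using insert unfolding add_diagonal_insert[OF insert.hyps(2)]
    by (auto simp: principal_minor_add_diagonal_singleton intro!: add_nonneg_pos)
qed simp

lemma det_eq_principal_minor:
  fixes M :: "real^('n::finite)^'n"
  assumes unit_rows: "\<And>j i. j \<notin> S \<Longrightarrow> M $ j $ i = (if i = j then 1 else 0)"
  shows "det M = principal_minor M S"
proof -
  have "det M = (\<Sum>p | p permutes S. of_int (sign p) * (\<Prod>i\<in>UNIV. M $ i $ p i))"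
    unfolding det_def
  proof (rule sum.mono_neutral_cong_right)
    show "\<forall>p\<in>{p. p permutes UNIV} - {p. p permutes S}.
            of_int (sign p) * (\<Prod>i\<in>UNIV. M $ i $ p i) = 0"
    proof
      fix p assume "p \<in> {p. p permutes UNIV} - {p. p permutes S}"
      then obtain i where "i \<notin> S" "p i \<noteq> i"
        using permutes_superset by blast
      then have "M $ i $ p i = 0"
        using unit_rows by simp
      then show "of_int (sign p) * (\<Prod>i\<in>UNIV. M $ i $ p i) = 0"
        by (auto simp: prod_zero_iff)
    qed
  qed (auto intro: permutes_subset)
  also have "\<dots> = principal_minor M S"
    unfolding principal_minor_def
  proof (rule sum.cong[OF refl])
    fix p assume "p \<in> {p. p permutes S}"
    then have "(\<Prod>i\<in>UNIV - S. M $ i $ p i) = 1"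
      using unit_rows by (auto intro!: prod.neutral simp: permutes_not_in)
    then show "of_int (sign p) * (\<Prod>i\<in>UNIV. M $ i $ p i) = of_int (sign p) * (\<Prod>i\<in>S. M $ i $ p i)"
      using prod.subset_diff[of S UNIV "\<lambda>i. M $ i $ p i"] by simp
  qed
  finally show ?thesis .
qed

lemma det_eq_0_iff_nontrivial_kernel:
  fixes M :: "'a::field^('n::finite)^'n"
  shows "det M = 0 \<longleftrightarrow> (\<exists>u. u \<noteq> 0 \<and> M *v u = 0)"
  using invertible_det_nz[of M] invertible_left_inverse[of M] matrix_left_invertible_ker[of M]
  by blast

lemma add_diagonal_mult_vec_nth:
  "(add_diagonal A d S *v u) $ j = (A *v u) $ j + (if j \<in> S then d j * u $ j else 0)"
proof -
  have "(add_diagonal A d S *v u) $ j =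
          (\<Sum>i\<in>UNIV. A $ j $ i * u $ i + (if i = j \<and> j \<in> S then d j * u $ j else 0))"
    unfolding add_diagonal_def matrix_vector_mult_def vec_lambda_beta
    by (intro sum.cong) (auto simp: algebra_simps)
  then show ?thesis
    by (simp add: sum.distrib matrix_vector_mult_def)
qed

lemma principal_minor_eq_0_if_null_vector:
  fixes B :: "real^('n::finite)^'n"
  assumes "u \<noteq> 0" and supp_u: "\<And>j. j \<notin> S \<Longrightarrow> u $ j = 0"
    and null: "\<And>j. j \<in> S \<Longrightarrow> (B *v u) $ j = 0"
  shows "principal_minor B S = 0"
proof -
  define M :: "real^'n^'n" where "M = (\<chi> j i. if j \<in> S then B $ j $ i else if i = j then 1 else 0)"
  have "(M *v u) $ j = 0" for j
  proof (cases "j \<in> S")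
    case True
    then show ?thesis
      using null by (simp add: M_def matrix_vector_mult_def)
  next
    case False
    then have "(M *v u) $ j = (\<Sum>i\<in>UNIV. if i = j then u $ j else 0)"
      unfolding M_def matrix_vector_mult_def vec_lambda_beta by (intro sum.cong) auto
    then show ?thesis
      using False supp_u by simp
  qed
  then have "M *v u = 0"
    by (simp add: vec_eq_iff)
  then have "det M = 0"
    using \<open>u \<noteq> 0\<close> det_eq_0_iff_nontrivial_kernel by blast
  moreover have "det M = principal_minor B S"
    by (subst det_eq_principal_minor[of S]) (auto simp: M_def intro: principal_minor_cong)
  ultimately show ?thesis
    by simp
qed

text \<open>If u \<noteq> 0, then on its support S the positive diagonal e can be lowered to a still positive
  one that makes u a null vector of the S-block, whose principal minor is positive.\<close>
lemma P0_matrix_add_positive_diagonal_nonneg_nonpos_eq_0: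
  fixes A :: "real^('n::finite)^'n" and u :: "real^'n"
  assumes P0: "P0_matrix A" and e_pos: "\<forall>j. 0 < e j" and u_nonneg: "\<forall>j. 0 \<le> u $ j"
    and nonpos: "\<forall>j. (A *v u) $ j + e j * u $ j \<le> 0"
  shows "u = 0"
proof (rule ccontr)
  assume "u \<noteq> 0"
  define S where "S = {j. 0 < u $ j}"
  define g where "g j = - (A *v u) $ j / u $ j" for j
  have g_pos: "\<forall>j\<in>S. 0 < g j"
  proof
    fix j assume "j \<in> S"
    then have "0 < u $ j" "0 < e j * u $ j"
      using e_pos by (auto simp: S_def)
    moreover have "(A *v u) $ j < 0"
      using calculation nonpos[rule_format, of j] by linarith
    ultimately show "0 < g j"
      by (simp add: g_def divide_neg_pos)
  qed
  have "principal_minor (add_diagonal A g S) S = 0"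
  proof (rule principal_minor_eq_0_if_null_vector[OF \<open>u \<noteq> 0\<close>])
    show "u $ j = 0" if "j \<notin> S" for j
      using that u_nonneg by (simp add: S_def not_less order_antisym)
    show "(add_diagonal A g S *v u) $ j = 0" if "j \<in> S" for j
      using that by (simp add: add_diagonal_mult_vec_nth g_def S_def)
  qed
  then show False
    using principal_minor_add_diagonal_pos[OF P0 g_pos] by simp
qed

lemma det_nonzero_if_dominated_by_P0_matrix:
  fixes M :: "complex^('n::finite)^'n" and A :: "real^'n^'n"
  assumes P0: "P0_matrix A"
    and diag: "\<And>j. A $ j $ j < cmod (M $ j $ j)"
    and offdiag: "\<And>j i. j \<noteq> i \<Longrightarrow> cmod (M $ j $ i) \<le> - A $ j $ i"
  shows "det M \<noteq> 0"
proof
  assume "det M = 0"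
  then obtain z where "z \<noteq> 0" and Mz: "M *v z = 0"
    using det_eq_0_iff_nontrivial_kernel by blast
  define u where "u = (\<chi> i. cmod (z $ i))"
  have "(A *v u) $ j + (cmod (M $ j $ j) - A $ j $ j) * u $ j \<le> 0" for j
  proof -
    have "M $ j $ j * z $ j = - (\<Sum>i\<in>UNIV - {j}. M $ j $ i * z $ i)"
      using arg_cong[OF Mz, of "\<lambda>v. v $ j"]
      by (simp add: matrix_vector_mult_def sum.remove[of UNIV j] eq_neg_iff_add_eq_0)
    then have "cmod (M $ j $ j * z $ j) = cmod (\<Sum>i\<in>UNIV - {j}. M $ j $ i * z $ i)"
      by simp
    then have "cmod (M $ j $ j) * u $ j = cmod (\<Sum>i\<in>UNIV - {j}. M $ j $ i * z $ i)"
      by (simp add: u_def norm_mult)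
    also have "\<dots> \<le> (\<Sum>i\<in>UNIV - {j}. cmod (M $ j $ i) * u $ i)"
      by (rule order.trans[OF norm_sum]) (simp add: u_def norm_mult)
    also have "\<dots> \<le> (\<Sum>i\<in>UNIV - {j}. - A $ j $ i * u $ i)"
      by (intro sum_mono mult_right_mono offdiag) (auto simp: u_def)
    finally show ?thesis
      by (simp add: matrix_vector_mult_def sum.remove[of UNIV j] sum_negf algebra_simps)
  qed
  then have "u = 0"
    using P0_matrix_add_positive_diagonal_nonneg_nonpos_eq_0[OF P0, of "\<lambda>j. cmod (M $ j $ j) - A $ j $ j"]
      diag by (simp add: u_def)
  then show False
    using \<open>z \<noteq> 0\<close> by (simp add: u_def vec_eq_iff)
qed

lemma norm_le_1_Re_eq_1_imp_eq_1:
  fixes w :: complex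
  assumes "cmod w \<le> 1" and "Re w = 1"
  shows "w = 1"
proof -
  have "(Re w)\<^sup>2 + (Im w)\<^sup>2 \<le> 1"
    using assms(1) by (simp add: cmod_def)
  then have "Im w = 0"
    using assms(2) by simp
  then show ?thesis
    using assms(2) by (simp add: complex_eq_iff)
qed

lemma norm_delayed_sum_le:
  fixes a p q :: "'r \<Rightarrow> real" and w :: "'r \<Rightarrow> complex"
  assumes coeffs: "\<And>r. r \<in> R \<Longrightarrow> 0 \<le> a r \<and> 0 \<le> p r \<and> 0 \<le> q r \<and> cmod (w r) \<le> 1"
  shows "cmod (\<Sum>r\<in>R. of_real (a r) * (of_real (p r) * w r - of_real (q r))) \<le>
           (\<Sum>r\<in>R. a r * (p r + q r))"
proof -
  have "cmod (of_real (a r) * (of_real (p r) * w r - of_real (q r))) \<le> a r * (p r + q r)"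
    if "r \<in> R" for r
  proof -
    have "cmod (of_real (p r) * w r - of_real (q r)) \<le> p r * cmod (w r) + q r"
      using coeffs[OF that] norm_triangle_ineq4[of "of_real (p r) * w r" "of_real (q r)"]
      by (simp add: norm_mult)
    also have "\<dots> \<le> p r + q r"
      using coeffs[OF that] by (simp add: mult_left_le)
    finally show ?thesis
      using coeffs[OF that] by (simp add: norm_mult mult_left_mono)
  qed
  then show ?thesis
    by (rule order.trans[OF norm_sum sum_mono])
qed

lemma norm_delayed_sum_sub_gt:
  fixes a p q :: "'r \<Rightarrow> real" and w :: "'r \<Rightarrow> complex" and lam :: complex
  assumes "finite R"
    and coeffs: "\<And>r. r \<in> R \<Longrightarrow> 0 \<le> a r \<and> 0 \<le> p r \<and> cmod (w r) \<le> 1"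
    and "0 \<le> Re lam" and "lam \<noteq> 0"
  shows "- (\<Sum>r\<in>R. a r * (p r - q r)) <
           cmod ((\<Sum>r\<in>R. of_real (a r) * (of_real (p r) * w r - of_real (q r))) - lam)"
proof -
  define s where "s = (\<Sum>r\<in>R. a r * (p r - q r))"
  define S where "S = (\<Sum>r\<in>R. of_real (a r) * (of_real (p r) * w r - of_real (q r)) :: complex)"
  define D where "D = (\<Sum>r\<in>R. a r * p r * (1 - Re (w r)))"
  have D_terms_nonneg: "0 \<le> a r * p r * (1 - Re (w r))" if "r \<in> R" for r
  proof -
    have "Re (w r) \<le> 1"
      using coeffs[OF that] abs_Re_le_cmod[of "w r"] by linarith
    then show ?thesis
      using coeffs[OF that] by simp
  qed
  have "Re S = s - D"
    unfolding S_def s_def D_def by (simp add: sum_subtractf[symmetric] algebra_simps)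
  show ?thesis
    unfolding s_def[symmetric] S_def[symmetric]
  proof (cases "0 < Re lam + D")
    case True
    then have "- s < Re (lam - S)"
      using \<open>Re S = s - D\<close> by simp
    then show "- s < cmod (S - lam)"
      using abs_Re_le_cmod[of "lam - S"] by (simp add: norm_minus_commute)
  next
    case False
    \<comment> \<open>equality: S is then real, and the nonzero imaginary part of lam enlarges the modulus\<close>
    moreover have "0 \<le> D"
      unfolding D_def using D_terms_nonneg by (rule sum_nonneg)
    ultimately have "Re lam = 0" and "D = 0"
      using \<open>0 \<le> Re lam\<close> by linarith+
    then have "a r * p r * (1 - Re (w r)) = 0" if "r \<in> R" for r
      using D_terms_nonneg \<open>finite R\<close> that by (simp add: D_def sum_nonneg_eq_0_iff)
    then have "of_real (a r * p r) * w r = of_real (a r * p r)" if "r \<in> R" for r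
      using that coeffs[OF that] norm_le_1_Re_eq_1_imp_eq_1[of "w r"] by fastforce
    then have "S = of_real s"
      unfolding S_def s_def by (auto simp: algebra_simps intro!: sum.cong)
    moreover have "Im lam \<noteq> 0"
      using \<open>Re lam = 0\<close> \<open>lam \<noteq> 0\<close> complex_eq_iff by auto
    ultimately have "(- s)\<^sup>2 < (cmod (S - lam))\<^sup>2"
      using \<open>Re lam = 0\<close> by (simp add: cmod_power2)
    then show "- s < cmod (S - lam)"
      using power_less_imp_less_base by fastforce
  qed
qed

lemma monom_pos: "positive_vec x \<Longrightarrow> 0 < monom x y"
  unfolding monom_def positive_vec_def by (intro prod_pos) (simp add: order_less_imp_not_eq2)

lemma delay_positive_equilibrium_iff:
  "delay_positive_equilibrium R tau k x \<longleftrightarrow> positive_equilibrium R k x"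
  unfolding delay_positive_equilibrium_def positive_equilibrium_def mass_action_rhs_def
  by (simp add: split_beta scaleR_diff_right sum_subtractf)

lemma det_J_lambda_0: "det (J_lambda R x k tau 0) = of_real (det (J_mat R x k))"
proof -
  have "J_lambda R x k tau 0 = (\<chi> j i. of_real (J_mat R x k $ j $ i))"
    by (simp add: J_lambda_def J_mat_def vec_eq_iff split_beta)
  then show ?thesis
    by (simp add: det_def)
qed

lemma J_lambda_entry:
  "J_lambda R x k tau lam $ j $ i =
     (\<Sum>r\<in>R. of_real (k r * monom x (fst r) * (fst r $ i / x $ i)) *
        (of_real (snd r $ j) * exp (- lam * of_real (tau r)) - of_real (fst r $ j)))"
  by (simp add: J_lambda_def split_beta)

context
  fixes R :: "('n::finite) reaction set" and k tau :: "'n reaction \<Rightarrow> real"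
    and x :: "real^'n" and lam :: complex
  assumes network: "reaction_network R" and rates_pos: "\<forall>r\<in>R. 0 < k r"
    and delays_nonneg: "\<forall>r\<in>R. 0 \<le> tau r" and x_pos: "positive_vec x"
    and Re_lam_nonneg: "0 \<le> Re lam"
begin

lemma J_lambda_summand_bounds:
  assumes "r \<in> R"
  shows "0 \<le> k r * monom x (fst r) * (fst r $ i / x $ i) \<and> 0 \<le> snd r $ j \<and> 0 \<le> fst r $ j \<and>
           cmod (exp (- lam * of_real (tau r))) \<le> 1"
proof -
  have "0 \<le> fst r $ i" "0 \<le> snd r $ j" "0 \<le> fst r $ j"
    using network assms by (auto simp: reaction_network_def split_beta)
  moreover have "0 < k r" "0 < monom x (fst r)" "0 < x $ i"
    using rates_pos x_pos assms by (auto simp: monom_pos positive_vec_def)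
  ultimately show ?thesis
    using delays_nonneg assms Re_lam_nonneg by simp
qed

lemma norm_J_lambda_offdiag_le_J_tilde:
  assumes "j \<noteq> i"
  shows "cmod (J_lambda R x k tau lam $ j $ i) \<le> J_tilde R x k $ j $ i"
proof -
  have J_tilde_entry: "J_tilde R x k $ j $ i =
          (\<Sum>r\<in>R. k r * monom x (fst r) * (fst r $ i / x $ i) * (snd r $ j + fst r $ j))"
    using assms by (simp add: J_tilde_def split_beta)
  show ?thesis
    unfolding J_lambda_entry J_tilde_entry
    by (rule norm_delayed_sum_le) (rule J_lambda_summand_bounds)
qed

lemma J_tilde_diag_lt_norm_J_lambda_sub:
  assumes "lam \<noteq> 0"
  shows "- J_tilde R x k $ j $ j < cmod (J_lambda R x k tau lam $ j $ j - lam)"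
proof -
  have J_tilde_entry: "J_tilde R x k $ j $ j =
          (\<Sum>r\<in>R. k r * monom x (fst r) * (fst r $ j / x $ j) * (snd r $ j - fst r $ j))"
    by (simp add: J_tilde_def split_beta)
  have "finite R"
    using network by (simp add: reaction_network_def)
  show ?thesis
    unfolding J_lambda_entry J_tilde_entry
    by (rule norm_delayed_sum_sub_gt[OF \<open>finite R\<close> _ Re_lam_nonneg assms])
      (use J_lambda_summand_bounds in blast)
qed

lemma det_J_lambda_sub_nonzero:
  assumes "lam \<noteq> 0" and "P0_matrix (- J_tilde R x k)"
  shows "det (J_lambda R x k tau lam - mat lam) \<noteq> 0"
  using assms(2)
proof (rule det_nonzero_if_dominated_by_P0_matrix)
  show "(- J_tilde R x k) $ j $ j < cmod ((J_lambda R x k tau lam - mat lam) $ j $ j)" for j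
    using J_tilde_diag_lt_norm_J_lambda_sub assms(1) by (simp add: mat_def)
  show "cmod ((J_lambda R x k tau lam - mat lam) $ j $ i) \<le> - (- J_tilde R x k) $ j $ i"
    if "j \<noteq> i" for j i
    using norm_J_lambda_offdiag_le_J_tilde that by (simp add: mat_def)
qed

end

theorem corollary1:
  fixes R :: "('n::finite) reaction set"
  assumes "reaction_network R"
    and "non_autocatalytic R"
    and "\<forall>k x. (\<forall>r\<in>R. k r > 0) \<longrightarrow> positive_equilibrium R k x \<longrightarrow>
           det (J_mat R x k) \<noteq> 0 \<and> (\<forall>i. J_tilde R x k $ i $ i < 0) \<and> P0_matrix (- J_tilde R x k)"
  shows "delay_stable R"
  unfolding delay_stable_def
proof (intro allI impI)
  fix k tau x and lam :: complex
  assume rates_pos: "\<forall>r\<in>R. 0 < k r" and delays_nonneg: "\<forall>r\<in>R. 0 \<le> tau r"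
    and equilibrium: "delay_positive_equilibrium R tau k x"
    and root: "det (J_lambda R x k tau lam - mat lam) = 0"
  have "positive_equilibrium R k x"
    using equilibrium by (simp add: delay_positive_equilibrium_iff)
  then have "det (J_mat R x k) \<noteq> 0" and "P0_matrix (- J_tilde R x k)"
    using assms(3) rates_pos by auto
  have "positive_vec x"
    using \<open>positive_equilibrium R k x\<close> by (simp add: positive_equilibrium_def)
  show "Re lam < 0"
  proof (rule ccontr)
    assume "\<not> Re lam < 0"
    then have "0 \<le> Re lam"
      by simp
    have "lam \<noteq> 0"
      using root \<open>det (J_mat R x k) \<noteq> 0\<close> by (auto simp: det_J_lambda_0)
    then have "det (J_lambda R x k tau lam - mat lam) \<noteq> 0"
      using det_J_lambda_sub_nonzero[OF assms(1) rates_pos delays_nonneg \<open>positive_vec x\<close>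
          \<open>0 \<le> Re lam\<close>] \<open>P0_matrix (- J_tilde R x k)\<close>
      by blast
    then show False
      using root by contradiction
  qed
qed

end
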